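(* In the fixed design setting below, let $0<\gamma<1/\|K_n\|$ and $t\ge2$ an integer. Then $$\mathbb E\,R(\breve f_{\gamma,t})\le c_t\,\mathbb E\,R(\bar f_{1/(\gamma t)}),\qquad c_t=4\Big(1+\frac1{t-1}\Big)^2\le16,$$ where the expectation is over the noise.
   Context: Fixed design: fixed inputs $x_1,\dots,x_n\in\mathcal X=\mathbb R^d$, outputs $y_i=f_*(x_i)+\epsilon_i$ with $f_*$ fixed and $\epsilon_i$ i.i.d. with zero mean and variance $\sigma^2$. $K$ is a positive definite kernel with RKHS $\mathcal H$, $(K_n)_{ij}=K(x_i,x_j)$, $Y=(y_1,\dots,y_n)$. Expected risk $\mathcal E(f)=\mathbb E\frac1n\sum_{i=1}^n(f(x_i)-y_i)^2$, excess risk $R(f)=\mathcal E(f)-\inf_{v\in\mathcal H}\mathcal E(v)$. KRLS: $\bar f_\lambda(x)=\sum_i(\bar\alpha_\lambda)_iK(x,x_i)$, $\bar\alpha_\lambda=(K_n+\lambda nI_n)^{-1}Y$. Early stopping (Landweber): $\breve\alpha_0=0$, $\breve\alpha_t=\breve\alpha_{t-1}-\frac\gamma n(K_n\breve\alpha_{t-1}-Y)$, $\breve f_{\gamma,t}(x)=\sum_i(\breve\alpha_t)_iK(x_i,x)$. *)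

theory Defs
  imports "HOL-Probability.Probability"
begin

text \<open>Positive definite kernel (machine-learning convention: symmetric and
  every Gram quadratic form is nonnegative).\<close>
definition pd_kernel :: "('a \<Rightarrow> 'a \<Rightarrow> real) \<Rightarrow> bool" where
  "pd_kernel K \<longleftrightarrow> (\<forall>x y. K x y = K y x) \<and>
     (\<forall>ps :: ('a \<times> real) list.
        0 \<le> (\<Sum>(z,a)\<leftarrow>ps. \<Sum>(z',b)\<leftarrow>ps. a * b * K z z'))"

definition kexp_eval :: "('a \<Rightarrow> 'a \<Rightarrow> real) \<Rightarrow> ('a \<times> real) list \<Rightarrow> 'a \<Rightarrow> real" where
  "kexp_eval K ps x = (\<Sum>(z,a)\<leftarrow>ps. a * K x z)"

definition kexp_sqnorm :: "('a \<Rightarrow> 'a \<Rightarrow> real) \<Rightarrow> ('a \<times> real) list \<Rightarrow> real" where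
  "kexp_sqnorm K ps = (\<Sum>(z,a)\<leftarrow>ps. \<Sum>(z',b)\<leftarrow>ps. a * b * K z z')"

text \<open>RKHS of K (Moore--Aronszajn construction): pointwise limits of sequences of
  finite kernel expansions that are Cauchy in the pre-Hilbert norm.\<close>
definition RKHS :: "('a \<Rightarrow> 'a \<Rightarrow> real) \<Rightarrow> ('a \<Rightarrow> real) set" where
  "RKHS K = {f. \<exists>r :: nat \<Rightarrow> ('a \<times> real) list.
      (\<forall>e>0. \<exists>N. \<forall>k\<ge>N. \<forall>m\<ge>N.
          kexp_sqnorm K (r k @ map (\<lambda>(z,a). (z, - a)) (r m)) < e) \<and>
      (\<forall>x. (\<lambda>k. kexp_eval K (r k) x) \<longlonglongrightarrow> f x)}"

definition gram :: "('a \<Rightarrow> 'a \<Rightarrow> real) \<Rightarrow> ('n::finite \<Rightarrow> 'a) \<Rightarrow> real^'n^'n" where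
  "gram K x = (\<chi> i j. K (x i) (x j))"

primrec landweber :: "real^'n^'n \<Rightarrow> real^'n \<Rightarrow> real \<Rightarrow> nat \<Rightarrow> real^('n::finite)" where
  "landweber Kn Y \<gamma> 0 = 0"
| "landweber Kn Y \<gamma> (Suc t) =
     landweber Kn Y \<gamma> t - (\<gamma> / real CARD('n)) *\<^sub>R (Kn *v landweber Kn Y \<gamma> t - Y)"

definition krls :: "real^'n^'n \<Rightarrow> real^'n \<Rightarrow> real \<Rightarrow> real^('n::finite)" where
  "krls Kn Y lam = matrix_inv (Kn + (lam * real CARD('n)) *\<^sub>R mat 1) *v Y"

definition outputs :: "('n::finite \<Rightarrow> 'a) \<Rightarrow> ('a \<Rightarrow> real) \<Rightarrow> ('n \<Rightarrow> 'w \<Rightarrow> real) \<Rightarrow> 'w \<Rightarrow> real^'n" where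
  "outputs x fstar eps \<omega> = (\<chi> i. fstar (x i) + eps i \<omega>)"

definition expected_risk :: "'w measure \<Rightarrow> ('n::finite \<Rightarrow> 'a) \<Rightarrow> ('a \<Rightarrow> real) \<Rightarrow> ('n \<Rightarrow> 'w \<Rightarrow> real)
     \<Rightarrow> ('a \<Rightarrow> real) \<Rightarrow> real" where
  "expected_risk M x fstar eps f =
     (\<integral>\<omega>. (1 / real CARD('n)) * (\<Sum>i\<in>UNIV. (f (x i) - (fstar (x i) + eps i \<omega>))\<^sup>2) \<partial>M)"

definition excess_risk :: "'w measure \<Rightarrow> ('a \<Rightarrow> 'a \<Rightarrow> real) \<Rightarrow> ('n::finite \<Rightarrow> 'a) \<Rightarrow> ('a \<Rightarrow> real)
     \<Rightarrow> ('n \<Rightarrow> 'w \<Rightarrow> real) \<Rightarrow> ('a \<Rightarrow> real) \<Rightarrow> real" where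
  "excess_risk M K x fstar eps f =
     expected_risk M x fstar eps f - (INF v\<in>RKHS K. expected_risk M x fstar eps v)"

end

theory Submission
  imports Defs
begin

text \<open>Diagonalise the Gram matrix \<open>K\<^sub>n\<close> in an orthonormal eigenbasis. Both estimators act
  diagonally there: in the direction of an eigenvector with eigenvalue \<open>\<mu>\<close>, writing
  \<open>u = \<gamma> \<mu> / n\<close>, the residual \<open>Y - K\<^sub>n \<alpha>\<close> is the fraction \<open>(1 - u)\<^sup>t\<close> of \<open>Y\<close> for Landweber and
  \<open>1 / (1 + t u)\<close> for KRLS with \<open>\<lambda> = 1/(\<gamma> t)\<close>. Hence the expected excess risk of either is a sum
  over directions of a bias term and a variance term, minus the same constant. Bernoulli's
  inequality gives \<open>(1 - u)\<^sup>t \<le> 1/(1 + t u)\<close> and \<open>1 - (1 - u)\<^sup>t \<le> 2 (1 - 1/(1 + t u))\<close>, so each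
  direction costs Landweber at most four times what it costs KRLS. The constant offset is
  controlled by comparing the infimum over the RKHS with the least-squares fit, which only pays
  for the directions with \<open>\<mu> = 0\<close>, where the two estimators coincide. Since \<open>4 \<le> c\<^sub>t \<le> 16\<close> this
  proves the claim; only centred, square-integrable noise is needed, not independence or
  identical distribution.\<close>

section \<open>Spectral theorem for self-adjoint maps\<close>

definition orthonormal_basis :: "'a::real_inner set \<Rightarrow> bool" where
  "orthonormal_basis B \<longleftrightarrow>
     finite B \<and> pairwise orthogonal B \<and> (\<forall>b\<in>B. norm b = 1) \<and> span B = UNIV"

lemma linear_coeff_zero_if_quadratic_nonpos:
  fixes a c :: real
  assumes "\<And>s. 2 * s * a + s\<^sup>2 * c \<le> 0"
  shows "a = 0"
proof -
  define d where "d = 1 + \<bar>c\<bar>"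
  have "d > 0" and "2 * d + c > 0"
    unfolding d_def by auto
  have "2 * (a / d) * a + (a / d)\<^sup>2 * c = a\<^sup>2 * (2 * d + c) / d\<^sup>2"
    using \<open>d > 0\<close> by (simp add: field_simps power2_eq_square)
  with assms[of "a / d"] have "a\<^sup>2 * (2 * d + c) \<le> 0"
    using \<open>d > 0\<close> by (simp add: divide_le_0_iff)
  with \<open>2 * d + c > 0\<close> have "a\<^sup>2 \<le> 0"
    by (simp add: mult_le_0_iff)
  then show ?thesis
    by simp
qed

text \<open>Otherwise the component \<open>r\<close> of \<open>f v\<close> orthogonal to \<open>v\<close> gives a direction of ascent
  \<open>v + s r\<close> for small \<open>s\<close>.\<close>
lemma self_adjoint_rayleigh_maximizer_eigenvector:
  fixes f :: "'a::real_inner \<Rightarrow> 'a"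
  assumes lin: "linear f" and adj: "\<And>v w. f v \<bullet> w = v \<bullet> f w"
    and S: "subspace S" and inv: "\<And>v. v \<in> S \<Longrightarrow> f v \<in> S"
    and v: "v \<in> S" "norm v = 1"
    and max: "\<And>z. z \<in> S \<Longrightarrow> norm z = 1 \<Longrightarrow> z \<bullet> f z \<le> v \<bullet> f v"
  shows "f v = (v \<bullet> f v) *\<^sub>R v"
proof -
  define l where "l = v \<bullet> f v"
  have vv: "v \<bullet> v = 1"
    using v(2) by (simp add: norm_eq_1)
  have hom: "z \<bullet> f z \<le> l * (norm z)\<^sup>2" if "z \<in> S" for z
  proof (cases "z = 0")
    case False
    have "(z /\<^sub>R norm z) \<bullet> f (z /\<^sub>R norm z) \<le> l"
      unfolding l_def using S that False by (intro max) (simp_all add: subspace_scale)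
    then have "(z \<bullet> f z) / (norm z)\<^sup>2 \<le> l"
      using lin by (simp add: linear_scale power2_eq_square divide_inverse mult_ac)
    then show ?thesis
      using False by (simp add: divide_le_eq)
  qed (use lin in \<open>simp add: linear_0\<close>)
  define r where "r = f v - l *\<^sub>R v"
  have r: "r \<in> S" "r \<bullet> v = 0" "r \<bullet> f v = r \<bullet> r"
    using S v inv vv unfolding r_def l_def
    by (auto simp: subspace_diff subspace_scale inner_diff_left inner_diff_right
        inner_commute[of "f v" v] inner_commute[of v r])
  have "2 * s * (r \<bullet> r) + s\<^sup>2 * (r \<bullet> f r - l * (r \<bullet> r)) \<le> 0" for s
  proof -
    have "(v + s *\<^sub>R r) \<bullet> f (v + s *\<^sub>R r) = l + 2 * s * (r \<bullet> r) + s\<^sup>2 * (r \<bullet> f r)"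
      using r(3) adj[of r v] lin unfolding l_def
      by (simp add: linear_add linear_scale inner_add_left inner_add_right
          inner_commute[of v "f r"] power2_eq_square algebra_simps)
    moreover have "(norm (v + s *\<^sub>R r))\<^sup>2 = 1 + s\<^sup>2 * (r \<bullet> r)"
      using vv r(2) unfolding power2_norm_eq_inner
      by (simp add: inner_add_left inner_add_right inner_commute[of v r] power2_eq_square)
    moreover have "v + s *\<^sub>R r \<in> S"
      using S v r by (simp add: subspace_add subspace_scale)
    ultimately show ?thesis
      using hom[of "v + s *\<^sub>R r"] by (simp add: algebra_simps)
  qed
  then have "r \<bullet> r = 0"
    by (rule linear_coeff_zero_if_quadratic_nonpos)
  then show ?thesis
    unfolding r_def l_def by simp
qed

lemma rayleigh_maximizer_exists:
  fixes f :: "'a::euclidean_space \<Rightarrow> 'a"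
  assumes "linear f" and S: "subspace S" and "S \<noteq> {0}"
  obtains v where "v \<in> S" and "norm v = 1"
    and "\<And>z. z \<in> S \<Longrightarrow> norm z = 1 \<Longrightarrow> z \<bullet> f z \<le> v \<bullet> f v"
proof -
  obtain s where s: "s \<in> S" "s \<noteq> 0"
    using S \<open>S \<noteq> {0}\<close> subspace_0 by blast
  define T where "T = S \<inter> sphere 0 1"
  have "compact T"
    unfolding T_def using closed_subspace[OF S] by (simp add: closed_Int_compact)
  moreover have "s /\<^sub>R norm s \<in> T"
    unfolding T_def using s S by (simp add: subspace_scale)
  moreover have "continuous_on T (\<lambda>v. v \<bullet> f v)"
    using \<open>linear f\<close> by (intro continuous_intros linear_continuous_on) (simp add: linear_conv_bounded_linear)
  ultimately obtain v where v: "v \<in> T" and vmax: "\<forall>z\<in>T. z \<bullet> f z \<le> v \<bullet> f v"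
    using continuous_attains_sup[of T "\<lambda>v. v \<bullet> f v"] by blast
  show ?thesis
  proof (rule that)
    show "v \<in> S" and "norm v = 1"
      using v unfolding T_def by auto
    show "z \<bullet> f z \<le> v \<bullet> f v" if "z \<in> S" and "norm z = 1" for z
      using vmax that unfolding T_def by auto
  qed
qed

lemma span_insert_orthogonal_complement:
  assumes S: "subspace S" and v: "v \<in> S" "norm v = 1"
    and B: "B \<subseteq> {w \<in> S. w \<bullet> v = 0}" "span B = {w \<in> S. w \<bullet> v = 0}"
  shows "span (insert v B) = S"
proof
  show "S \<subseteq> span (insert v B)"
  proof
    fix w assume "w \<in> S"
    then have "w - (w \<bullet> v) *\<^sub>R v \<in> span B"
      using S v B(2) by (simp add: subspace_diff subspace_scale inner_diff_left norm_eq_1)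
    then have "w - (w \<bullet> v) *\<^sub>R v \<in> span (insert v B)"
      by (meson span_mono subset_insertI subsetD)
    then show "w \<in> span (insert v B)"
      by (metis diff_add_cancel span_add span_base span_mul insertI1)
  qed
  show "span (insert v B) \<subseteq> S"
    using B(1) v S by (intro span_minimal) auto
qed

lemma self_adjoint_eigenbasis_subspace:
  fixes f :: "'a::euclidean_space \<Rightarrow> 'a"
  assumes lin: "linear f" and adj: "\<And>v w. f v \<bullet> w = v \<bullet> f w"
  shows "subspace S \<Longrightarrow> (\<And>v. v \<in> S \<Longrightarrow> f v \<in> S) \<Longrightarrow>
    \<exists>B. B \<subseteq> S \<and> finite B \<and> pairwise orthogonal B \<and> (\<forall>b\<in>B. norm b = 1) \<and> span B = S \<and>
        (\<forall>b\<in>B. \<exists>\<mu>. f b = \<mu> *\<^sub>R b)"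
proof (induction "dim S" arbitrary: S rule: less_induct)
  case less
  note S = less(2) and inv = less(3)
  show ?case
  proof (cases "S = {0}")
    case True
    then show ?thesis
      by (intro exI[of _ "{}"]) auto
  next
    case False
    obtain v where v: "v \<in> S" "norm v = 1"
      and vmax: "\<And>z. z \<in> S \<Longrightarrow> norm z = 1 \<Longrightarrow> z \<bullet> f z \<le> v \<bullet> f v"
      using rayleigh_maximizer_exists[OF lin S False] by blast
    have eig: "f v = (v \<bullet> f v) *\<^sub>R v"
      using self_adjoint_rayleigh_maximizer_eigenvector[OF lin adj S inv v vmax] .
    define S' where "S' = {w \<in> S. w \<bullet> v = 0}"
    have S': "subspace S'"
      using S unfolding S'_def subspace_def by (auto simp: inner_add_left)
    have inv': "f w \<in> S'" if "w \<in> S'" for w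
    proof -
      have "f w \<bullet> v = w \<bullet> ((v \<bullet> f v) *\<^sub>R v)"
        by (simp only: adj flip: eig)
      then show ?thesis
        using that inv unfolding S'_def by simp
    qed
    have "v \<notin> S'"
      using v unfolding S'_def by (simp add: norm_eq_1)
    then have "S' \<subset> S"
      using v unfolding S'_def by blast
    then have "dim S' < dim S"
      using S S' by (metis dim_psubset span_eq_iff)
    from less(1)[OF this S' inv'] obtain B' where B': "B' \<subseteq> S'" "finite B'"
        "pairwise orthogonal B'" "\<forall>b\<in>B'. norm b = 1" "span B' = S'" "\<forall>b\<in>B'. \<exists>\<mu>. f b = \<mu> *\<^sub>R b"
      by blast
    have "span (insert v B') = S"
      using span_insert_orthogonal_complement[OF S v] B'(1,5) unfolding S'_def by blast
    moreover have "pairwise orthogonal (insert v B')"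
      using B'(1,3) unfolding pairwise_def S'_def orthogonal_def by (auto simp: inner_commute)
    ultimately show ?thesis
      using B' v eig S'_def by (intro exI[of _ "insert v B'"]) auto
  qed
qed

lemma self_adjoint_eigenbasis:
  fixes f :: "'a::euclidean_space \<Rightarrow> 'a"
  assumes "linear f" and "\<And>v w. f v \<bullet> w = v \<bullet> f w"
  obtains B \<mu> where "orthonormal_basis B" and "\<And>b. b \<in> B \<Longrightarrow> f b = \<mu> b *\<^sub>R b"
  using self_adjoint_eigenbasis_subspace[OF assms, of UNIV]
  unfolding orthonormal_basis_def by (metis subspace_UNIV UNIV_I)

lemma orthonormal_basis_coeff:
  assumes "orthonormal_basis B" and "b \<in> B"
  shows "(\<Sum>b'\<in>B. c b' *\<^sub>R b') \<bullet> b = c b"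
proof -
  have "(\<Sum>b'\<in>B. c b' *\<^sub>R b') \<bullet> b = (\<Sum>b'\<in>B. c b' * (b' \<bullet> b))"
    by (simp add: inner_sum_left)
  also have "\<dots> = (\<Sum>b'\<in>B. if b' = b then c b else 0)"
    using assms unfolding orthonormal_basis_def pairwise_def orthogonal_def
    by (intro sum.cong) (auto simp: norm_eq_1)
  also have "\<dots> = c b"
    using assms unfolding orthonormal_basis_def by simp
  finally show ?thesis .
qed

lemma orthonormal_basis_parseval:
  assumes "orthonormal_basis B"
  shows "(norm z)\<^sup>2 = (\<Sum>b\<in>B. (z \<bullet> b)\<^sup>2)"
proof -
  have "z = (\<Sum>b\<in>B. (z \<bullet> b) *\<^sub>R b)"
    using assms unfolding orthonormal_basis_def by (simp add: orthonormal_basis_expand)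
  then have "z \<bullet> z = z \<bullet> (\<Sum>b\<in>B. (z \<bullet> b) *\<^sub>R b)"
    by simp
  then show ?thesis
    by (simp add: inner_sum_right power2_eq_square flip: power2_norm_eq_inner)
qed

section \<open>Gram matrix, Landweber iteration and KRLS\<close>

lemma gram_self_adjoint:
  assumes "\<And>a b. K a b = K b a"
  shows "(gram K x *v v) \<bullet> w = v \<bullet> (gram K x *v w)"
proof -
  have "(gram K x *v v) \<bullet> w = (\<Sum>i\<in>UNIV. \<Sum>j\<in>UNIV. K (x i) (x j) * v $ j * w $ i)"
    by (simp add: inner_vec_def matrix_vector_mult_def gram_def sum_distrib_right mult.assoc)
  also have "\<dots> = (\<Sum>j\<in>UNIV. \<Sum>i\<in>UNIV. K (x i) (x j) * v $ j * w $ i)"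
    by (rule sum.swap)
  also have "\<dots> = v \<bullet> (gram K x *v w)"
    using assms
    by (simp add: inner_vec_def matrix_vector_mult_def gram_def sum_distrib_left mult.assoc mult.left_commute)
  finally show ?thesis .
qed

lemma gram_psd:
  fixes x :: "'n::finite \<Rightarrow> 'a"
  assumes "pd_kernel K"
  shows "0 \<le> z \<bullet> (gram K x *v z)"
proof -
  obtain xs :: "'n list" where xs: "distinct xs" "set xs = UNIV"
    using finite_distinct_list[OF finite_class.finite_UNIV] by metis
  have "0 \<le> (\<Sum>(p,a)\<leftarrow>map (\<lambda>i. (x i, z $ i)) xs. \<Sum>(p',b)\<leftarrow>map (\<lambda>i. (x i, z $ i)) xs. a * b * K p p')"
    using assms unfolding pd_kernel_def by blast
  also have "\<dots> = (\<Sum>i\<in>UNIV. \<Sum>j\<in>UNIV. z $ i * z $ j * K (x i) (x j))"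
    using xs by (simp add: o_def sum_list_distinct_conv_sum_set)
  also have "\<dots> = z \<bullet> (gram K x *v z)"
    by (simp add: inner_vec_def matrix_vector_mult_def gram_def sum_distrib_left mult_ac)
  finally show ?thesis .
qed

lemma gram_eigenbasis:
  assumes "pd_kernel K"
  obtains B \<mu> where "orthonormal_basis B"
    and "\<And>b. b \<in> B \<Longrightarrow> gram K x *v b = \<mu> b *\<^sub>R b"
    and "\<And>b. b \<in> B \<Longrightarrow> 0 \<le> \<mu> b"
    and "\<And>b. b \<in> B \<Longrightarrow> \<mu> b \<le> onorm (\<lambda>v. gram K x *v v)"
proof -
  have "\<And>a b. K a b = K b a"
    using assms unfolding pd_kernel_def by blast
  then obtain B \<mu> where B: "orthonormal_basis B" and eig: "\<And>b. b \<in> B \<Longrightarrow> gram K x *v b = \<mu> b *\<^sub>R b"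
    using self_adjoint_eigenbasis[OF matrix_vector_mul_linear gram_self_adjoint] by metis
  have unit: "norm b = 1" if "b \<in> B" for b
    using B that unfolding orthonormal_basis_def by blast
  have nonneg: "0 \<le> \<mu> b" if "b \<in> B" for b
    using gram_psd[OF assms, where x=x and z=b] eig[OF that] unit[OF that] by (simp add: norm_eq_1)
  have "\<mu> b \<le> onorm (\<lambda>v. gram K x *v v)" if "b \<in> B" for b
  proof -
    have "norm (gram K x *v b) \<le> onorm (\<lambda>v. gram K x *v v) * norm b"
      by (rule onorm) (simp add: matrix_vector_mul_bounded_linear)
    then show ?thesis
      using eig[OF that] unit[OF that] nonneg[OF that] by simp
  qed
  with B eig nonneg show ?thesis
    by (rule that)
qed

lemma landweber_residual_eigen:
  fixes G :: "real^'n::finite^'n"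
  assumes adj: "\<And>v w. (G *v v) \<bullet> w = v \<bullet> (G *v w)" and eig: "G *v b = \<mu> *\<^sub>R b"
  shows "(Y - G *v landweber G Y \<gamma> t) \<bullet> b = (1 - \<gamma> / real CARD('n) * \<mu>) ^ t * (Y \<bullet> b)"
proof (induction t)
  case (Suc t)
  define r where "r = Y - G *v landweber G Y \<gamma> t"
  define c where "c = \<gamma> / real CARD('n)"
  have "Y - G *v landweber G Y \<gamma> (Suc t) = r - c *\<^sub>R (G *v r)"
    unfolding r_def c_def by (simp add: algebra_simps)
  then have "(Y - G *v landweber G Y \<gamma> (Suc t)) \<bullet> b = r \<bullet> b - c * ((G *v r) \<bullet> b)"
    by (simp add: inner_diff_left)
  also have "\<dots> = (1 - c * \<mu>) * (r \<bullet> b)"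
    using adj[of r b] eig by (simp add: algebra_simps)
  finally show ?case
    using Suc.IH unfolding r_def c_def by simp
qed simp

lemma invertible_psd_plus_scalar:
  fixes G :: "real^'n::finite^'n"
  assumes psd: "\<And>z. 0 \<le> z \<bullet> (G *v z)" and "0 < c"
  shows "invertible (G + c *\<^sub>R mat 1)"
proof -
  have "z = 0" if "(G + c *\<^sub>R mat 1) *v z = 0" for z
  proof -
    have "z \<bullet> (G *v z) + c * (z \<bullet> z) = 0"
      using arg_cong[OF that, of "inner z"]
      by (simp add: matrix_vector_mult_add_rdistrib inner_add_right flip: scaleR_matrix_vector_assoc)
    then have "c * (z \<bullet> z) \<le> 0"
      using psd[of z] by linarith
    then have "z \<bullet> z \<le> 0"
      using \<open>0 < c\<close> by (simp add: mult_le_0_iff)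
    then show "z = 0"
      by (meson inner_eq_zero_iff inner_ge_zero order_antisym)
  qed
  then show ?thesis
    using matrix_left_invertible_ker invertible_left_inverse by blast
qed

lemma krls_normal_equation:
  fixes G :: "real^'n::finite^'n"
  assumes "\<And>z. 0 \<le> z \<bullet> (G *v z)" and "0 < lam"
  shows "G *v krls G Y lam + (lam * real CARD('n)) *\<^sub>R krls G Y lam = Y"
proof -
  define A where "A = G + (lam * real CARD('n)) *\<^sub>R mat 1"
  have "invertible A"
    unfolding A_def using assms by (intro invertible_psd_plus_scalar) auto
  then have "A ** matrix_inv A = mat 1"
    unfolding invertible_def matrix_inv_def by (rule someI_ex[THEN conjunct1])
  then have "A *v (matrix_inv A *v Y) = Y"
    by (simp add: matrix_vector_mul_assoc)
  then show ?thesis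
    unfolding A_def krls_def
    by (simp add: matrix_vector_mult_add_rdistrib flip: scaleR_matrix_vector_assoc)
qed

lemma krls_residual_eigen:
  fixes G :: "real^'n::finite^'n"
  assumes adj: "\<And>v w. (G *v v) \<bullet> w = v \<bullet> (G *v w)" and psd: "\<And>z. 0 \<le> z \<bullet> (G *v z)"
    and eig: "G *v b = \<mu> *\<^sub>R b" and "0 \<le> \<mu>" and "0 < lam"
  shows "(Y - G *v krls G Y lam) \<bullet> b = lam * real CARD('n) / (\<mu> + lam * real CARD('n)) * (Y \<bullet> b)"
proof -
  define c where "c = lam * real CARD('n)"
  define \<beta> where "\<beta> = krls G Y lam"
  have "0 < c"
    unfolding c_def using \<open>0 < lam\<close> by simp
  have normal: "G *v \<beta> + c *\<^sub>R \<beta> = Y"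
    unfolding \<beta>_def c_def using krls_normal_equation[OF psd \<open>0 < lam\<close>] .
  then have "Y \<bullet> b = (\<mu> + c) * (\<beta> \<bullet> b)"
    using adj[of \<beta> b] eig by (auto simp: inner_add_left algebra_simps)
  moreover have "(Y - G *v \<beta>) \<bullet> b = c * (\<beta> \<bullet> b)"
    unfolding normal[symmetric] by simp
  ultimately show ?thesis
    unfolding \<beta>_def c_def[symmetric] using \<open>0 < c\<close> \<open>0 \<le> \<mu>\<close> by (simp add: field_simps)
qed

lemma kexp_sqnorm_append_negation:
  "kexp_sqnorm K (ps @ map (\<lambda>(z,a). (z, - a)) ps) = 0"
proof -
  define L where "L = ps @ map (\<lambda>(z,a). (z, - a)) ps"
  define h where "h = (\<lambda>(z, a). a * (\<Sum>(z',b)\<leftarrow>L. b * K z z'))"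
  have "sum_list (map h (map (\<lambda>(z,a). (z, - a)) qs)) = - sum_list (map h qs)" for qs
    by (induction qs) (auto simp: h_def)
  then have "sum_list (map h L) = 0"
    unfolding L_def by simp
  moreover have "kexp_sqnorm K L = sum_list (map h L)"
    unfolding kexp_sqnorm_def h_def
    by (simp add: sum_list_const_mult[symmetric] split_def mult.assoc)
  ultimately show ?thesis
    unfolding L_def by simp
qed

lemma kexp_eval_in_RKHS: "kexp_eval K ps \<in> RKHS K"
  unfolding RKHS_def using kexp_sqnorm_append_negation[of K ps]
  by (intro CollectI exI[of _ "\<lambda>_. ps"]) auto

lemma kernel_expansion_in_RKHS:
  fixes x :: "'n::finite \<Rightarrow> 'a"
  shows "(\<lambda>z. \<Sum>i\<in>UNIV. \<beta> $ i * K z (x i)) \<in> RKHS K"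
proof -
  obtain xs where xs: "distinct xs" "set xs = (UNIV :: 'n set)"
    using finite_distinct_list[OF finite_class.finite_UNIV] by metis
  have "(\<lambda>z. \<Sum>i\<in>UNIV. \<beta> $ i * K z (x i)) = kexp_eval K (map (\<lambda>i. (x i, \<beta> $ i)) xs)"
    unfolding kexp_eval_def using xs by (simp add: o_def sum_list_distinct_conv_sum_set)
  then show ?thesis
    using kexp_eval_in_RKHS by simp
qed

section \<open>Spectral filters\<close>

lemma landweber_filter_le_tikhonov:
  fixes u :: real
  assumes "0 \<le> u" "u \<le> 1"
  shows "(1 - u) ^ t \<le> 1 / (1 + t * u)"
proof -
  have "(1 - u) ^ t * (1 + t * u) \<le> (1 - u) ^ t * (1 + u) ^ t"
    using assms Bernoulli_inequality[of u t] by (intro mult_left_mono) auto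
  also have "\<dots> = (1 - u * u) ^ t"
    by (simp add: power_mult_distrib[symmetric] algebra_simps)
  also have "\<dots> \<le> 1"
    using assms by (simp add: power_le_one mult_le_one)
  finally show ?thesis
    using assms by (simp add: field_simps add_pos_nonneg)
qed

lemma landweber_gain_le_tikhonov:
  fixes u :: real
  assumes "0 \<le> u" "u \<le> 1"
  shows "1 - (1 - u) ^ t \<le> 2 * (1 - 1 / (1 + t * u))"
proof -
  have pos: "0 < 1 + t * u"
    using assms by (simp add: add_pos_nonneg)
  have "1 - 1 / (1 + t * u) = t * u / (1 + t * u)"
    using pos by (simp add: field_simps)
  moreover have "1 - (1 - u) ^ t \<le> 2 * (t * u / (1 + t * u))"
  proof (cases "t * u \<le> 1")
    case True
    then have "t * u * (1 + t * u) \<le> t * u * 2"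
      using assms by (intro mult_left_mono) auto
    then have "t * u \<le> 2 * (t * u) / (1 + t * u)"
      using pos by (simp add: pos_le_divide_eq mult.commute)
    then show ?thesis
      using Bernoulli_inequality[of "- u" t] assms by simp
  next
    case False
    then have "1 \<le> 2 * (t * u) / (1 + t * u)"
      using pos by (simp add: field_simps)
    moreover have "0 \<le> (1 - u) ^ t"
      using assms by simp
    ultimately show ?thesis
      by simp
  qed
  ultimately show ?thesis
    by simp
qed

text \<open>Risk carried by one eigendirection of an estimator whose residual there is the fraction \<open>\<rho>\<close>
  of the observation: \<open>V\<close> is the noise variance and \<open>a\<close> the signal coefficient in that direction.\<close>
definition filter_risk :: "real \<Rightarrow> real \<Rightarrow> real \<Rightarrow> real" where
  "filter_risk \<rho> V a = (1 - \<rho>)\<^sup>2 * V + (\<rho> * a)\<^sup>2"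

lemma filter_risk_landweber_le_tikhonov:
  fixes u V :: real
  assumes "0 \<le> V" "0 \<le> u" "u \<le> 1"
  shows "filter_risk ((1 - u) ^ t) V a \<le> 4 * filter_risk (1 / (1 + t * u)) V a"
proof -
  have "0 \<le> 1 - (1 - u) ^ t"
    using assms by (simp add: power_le_one)
  with landweber_gain_le_tikhonov[OF assms(2,3)]
  have "(1 - (1 - u) ^ t)\<^sup>2 \<le> (2 * (1 - 1 / (1 + t * u)))\<^sup>2"
    by (rule power_mono)
  then have "(1 - (1 - u) ^ t)\<^sup>2 * V \<le> (2 * (1 - 1 / (1 + t * u)))\<^sup>2 * V"
    by (rule mult_right_mono[OF _ assms(1)])
  also have "\<dots> = 4 * ((1 - 1 / (1 + t * u))\<^sup>2 * V)"
    by (simp only: power_mult_distrib mult.assoc) simp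
  finally have variance: "(1 - (1 - u) ^ t)\<^sup>2 * V \<le> 4 * ((1 - 1 / (1 + t * u))\<^sup>2 * V)" .
  have "0 \<le> (1 - u) ^ t"
    using assms by simp
  with landweber_filter_le_tikhonov[OF assms(2,3)]
  have "((1 - u) ^ t)\<^sup>2 \<le> (1 / (1 + t * u))\<^sup>2"
    by (rule power_mono)
  then have bias: "((1 - u) ^ t * a)\<^sup>2 \<le> (1 / (1 + t * u) * a)\<^sup>2"
    unfolding power_mult_distrib[of _ a] by (rule mult_right_mono) simp
  show ?thesis
    using variance bias zero_le_power2[of "1 / (1 + t * u) * a"]
    unfolding filter_risk_def distrib_left by linarith
qed

lemma filter_risk_landweber_le_krls:
  fixes \<gamma> \<mu> n V a :: real
  assumes "0 < \<gamma>" "0 \<le> \<mu>" "\<gamma> * \<mu> < 1" "1 \<le> n" "0 < t" "0 \<le> V"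
  shows "filter_risk ((1 - \<gamma> / n * \<mu>) ^ t) V a - (if \<mu> = 0 then a\<^sup>2 else 0)
    \<le> 4 * (filter_risk (1 / (\<gamma> * t) * n / (\<mu> + 1 / (\<gamma> * t) * n)) V a - (if \<mu> = 0 then a\<^sup>2 else 0))"
proof (cases "\<mu> = 0")
  case True
  then show ?thesis
    using assms unfolding filter_risk_def by simp
next
  case False
  define u where "u = \<gamma> / n * \<mu>"
  have "0 \<le> \<gamma> * \<mu>"
    using assms by simp
  then have "\<gamma> * \<mu> * 1 \<le> \<gamma> * \<mu> * n"
    using \<open>1 \<le> n\<close> by (rule mult_left_mono[rotated])
  then have "u \<le> \<gamma> * \<mu>"
    unfolding u_def using \<open>1 \<le> n\<close> by (simp add: divide_le_eq)
  then have "u \<le> 1"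
    using \<open>\<gamma> * \<mu> < 1\<close> by linarith
  moreover have "0 \<le> u"
    unfolding u_def using \<open>1 \<le> n\<close> \<open>0 \<le> \<gamma> * \<mu>\<close> by simp
  moreover have "1 / (\<gamma> * t) * n / (\<mu> + 1 / (\<gamma> * t) * n) = 1 / (1 + t * u)"
    unfolding u_def using assms by (simp add: field_simps)
  ultimately show ?thesis
    using filter_risk_landweber_le_tikhonov[of V u t a] False assms(6) unfolding u_def by simp
qed

lemma landweber_constant_bounds:
  assumes "2 \<le> t"
  shows "4 \<le> 4 * (1 + 1 / (real t - 1))\<^sup>2" and "4 * (1 + 1 / (real t - 1))\<^sup>2 \<le> 16"
proof -
  have "0 \<le> 1 / (real t - 1)" and "1 / (real t - 1) \<le> 1"
    using assms by auto
  then have "1 \<le> (1 + 1 / (real t - 1))\<^sup>2" and "(1 + 1 / (real t - 1))\<^sup>2 \<le> 2\<^sup>2"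
    by (intro one_le_power power_mono; simp)+
  then show "4 \<le> 4 * (1 + 1 / (real t - 1))\<^sup>2" and "4 * (1 + 1 / (real t - 1))\<^sup>2 \<le> 16"
    by auto
qed

section \<open>Fixed-design risk\<close>

lemma (in finite_measure) integrable_product_of_square_integrable:
  fixes f g :: "'a \<Rightarrow> real"
  assumes [measurable]: "f \<in> borel_measurable M" "g \<in> borel_measurable M"
    and "integrable M (\<lambda>w. (f w)\<^sup>2)" "integrable M (\<lambda>w. (g w)\<^sup>2)"
  shows "integrable M (\<lambda>w. f w * g w)"
proof (rule Bochner_Integration.integrable_bound[where f = "\<lambda>w. (f w)\<^sup>2 + (g w)\<^sup>2"])
  have "\<bar>f w\<bar> * \<bar>g w\<bar> \<le> (f w)\<^sup>2 + (g w)\<^sup>2" for w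
  proof -
    have "2 * \<bar>f w\<bar> * \<bar>g w\<bar> \<le> (f w)\<^sup>2 + (g w)\<^sup>2"
      using sum_squares_bound[of "\<bar>f w\<bar>" "\<bar>g w\<bar>"] by (simp add: power2_abs)
    moreover have "0 \<le> \<bar>f w\<bar> * \<bar>g w\<bar>"
      by simp
    ultimately show ?thesis
      by linarith
  qed
  then show "AE w in M. norm (f w * g w) \<le> norm ((f w)\<^sup>2 + (g w)\<^sup>2)"
    by (simp add: abs_mult)
qed (use assms in simp_all)

lemma (in finite_measure) square_integrable_sum:
  fixes f :: "'i \<Rightarrow> 'a \<Rightarrow> real"
  assumes "finite I"
    and "\<And>i. i \<in> I \<Longrightarrow> f i \<in> borel_measurable M"
    and "\<And>i. i \<in> I \<Longrightarrow> integrable M (\<lambda>w. (f i w)\<^sup>2)"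
  shows "integrable M (\<lambda>w. (\<Sum>i\<in>I. f i w)\<^sup>2)"
proof -
  have "(\<lambda>w. (\<Sum>i\<in>I. f i w)\<^sup>2) = (\<lambda>w. \<Sum>i\<in>I. \<Sum>j\<in>I. f i w * f j w)"
    by (simp add: power2_eq_square sum_product)
  then show ?thesis
    using assms integrable_product_of_square_integrable by auto
qed

lemma (in prob_space) expectation_centered_affine_square:
  fixes e :: "'a \<Rightarrow> real"
  assumes "integrable M e" and "integrable M (\<lambda>w. (e w)\<^sup>2)" and "expectation e = 0"
  shows "integrable M (\<lambda>w. (p * e w - q)\<^sup>2)"
    and "expectation (\<lambda>w. (p * e w - q)\<^sup>2) = p\<^sup>2 * expectation (\<lambda>w. (e w)\<^sup>2) + q\<^sup>2"
proof -
  have expand: "(\<lambda>w. (p * e w - q)\<^sup>2) = (\<lambda>w. p\<^sup>2 * (e w)\<^sup>2 + (- 2 * p * q) * e w + q\<^sup>2)"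
    by (simp add: fun_eq_iff power2_eq_square algebra_simps)
  show "integrable M (\<lambda>w. (p * e w - q)\<^sup>2)"
    unfolding expand using assms by auto
  show "expectation (\<lambda>w. (p * e w - q)\<^sup>2) = p\<^sup>2 * expectation (\<lambda>w. (e w)\<^sup>2) + q\<^sup>2"
    unfolding expand using assms prob_space by simp
qed

definition design_vec :: "('n::finite \<Rightarrow> 'a) \<Rightarrow> ('a \<Rightarrow> real) \<Rightarrow> real^'n" where
  "design_vec x f = (\<chi> i. f (x i))"

lemma design_vec_kernel_expansion:
  "design_vec x (\<lambda>z. \<Sum>i\<in>UNIV. \<beta> $ i * K z (x i)) = gram K x *v \<beta>"
  by (simp add: design_vec_def vec_eq_iff matrix_vector_mult_def gram_def mult.commute)

locale fixed_design = prob_space M for M :: "'w measure" +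
  fixes x :: "'n::finite \<Rightarrow> 'a" and fstar :: "'a \<Rightarrow> real" and eps :: "'n \<Rightarrow> 'w \<Rightarrow> real"
    and K :: "'a \<Rightarrow> 'a \<Rightarrow> real"
  assumes eps_measurable: "eps i \<in> borel_measurable M"
    and eps_square_integrable: "integrable M (\<lambda>\<omega>. (eps i \<omega>)\<^sup>2)"
    and eps_centered: "expectation (eps i) = 0"
    and kernel_pd: "pd_kernel K"
begin

definition noise :: "'w \<Rightarrow> real^'n" where
  "noise \<omega> = (\<chi> i. eps i \<omega>)"

definition noise_level :: real where
  "noise_level = (\<Sum>i\<in>UNIV. expectation (\<lambda>\<omega>. (eps i \<omega>)\<^sup>2)) / real CARD('n)"

definition min_risk :: real where
  "min_risk = (INF v\<in>RKHS K. expected_risk M x fstar eps v)"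

lemma kernel_symmetric: "K a b = K b a"
  using kernel_pd unfolding pd_kernel_def by blast

lemma outputs_eq: "outputs x fstar eps \<omega> = design_vec x fstar + noise \<omega>"
  by (simp add: outputs_def design_vec_def noise_def vec_eq_iff)

lemma eps_integrable: "integrable M (eps i)"
  using square_integrable_imp_integrable[OF eps_measurable eps_square_integrable] .

lemma expected_risk_eq:
  "expected_risk M x fstar eps f =
     (norm (design_vec x f - design_vec x fstar))\<^sup>2 / real CARD('n) + noise_level"
proof -
  have sq: "(f (x i) - (fstar (x i) + eps i \<omega>))\<^sup>2 = (1 * eps i \<omega> - (f (x i) - fstar (x i)))\<^sup>2"
    for i \<omega>
    by (simp add: power2_eq_square algebra_simps)
  note centered = expectation_centered_affine_square[OF eps_integrable eps_square_integrable eps_centered,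
      where p = 1]
  have "expected_risk M x fstar eps f =
      (\<Sum>i\<in>UNIV. expectation (\<lambda>\<omega>. (1 * eps i \<omega> - (f (x i) - fstar (x i)))\<^sup>2)) / real CARD('n)"
    unfolding expected_risk_def sq using centered(1) by (simp add: integral_sum)
  also have "\<dots> = (\<Sum>i\<in>UNIV. (f (x i) - fstar (x i))\<^sup>2) / real CARD('n) + noise_level"
    unfolding noise_level_def centered(2) by (simp add: sum.distrib add_divide_distrib)
  also have "(\<Sum>i\<in>UNIV. (f (x i) - fstar (x i))\<^sup>2) = (norm (design_vec x f - design_vec x fstar))\<^sup>2"
    unfolding power2_norm_eq_inner by (simp add: design_vec_def inner_vec_def power2_eq_square)
  finally show ?thesis .
qed

lemma noise_component:
  shows "integrable M (\<lambda>\<omega>. noise \<omega> \<bullet> b)"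
    and "integrable M (\<lambda>\<omega>. (noise \<omega> \<bullet> b)\<^sup>2)"
    and "expectation (\<lambda>\<omega>. noise \<omega> \<bullet> b) = 0"
proof -
  have coeff: "noise \<omega> \<bullet> b = (\<Sum>i\<in>UNIV. b $ i * eps i \<omega>)" for \<omega>
    by (simp add: noise_def inner_vec_def mult.commute)
  show "integrable M (\<lambda>\<omega>. noise \<omega> \<bullet> b)"
    unfolding coeff using eps_integrable by auto
  show "integrable M (\<lambda>\<omega>. (noise \<omega> \<bullet> b)\<^sup>2)"
    unfolding coeff
  proof (rule square_integrable_sum)
    show "(\<lambda>\<omega>. b $ i * eps i \<omega>) \<in> borel_measurable M" for i
      using eps_measurable by simp
    show "integrable M (\<lambda>\<omega>. (b $ i * eps i \<omega>)\<^sup>2)" for i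
      using eps_square_integrable by (simp add: power_mult_distrib)
  qed simp
  show "expectation (\<lambda>\<omega>. noise \<omega> \<bullet> b) = 0"
    unfolding coeff using eps_integrable eps_centered by (simp add: integral_sum)
qed

lemma min_risk_le: "f \<in> RKHS K \<Longrightarrow> min_risk \<le> expected_risk M x fstar eps f"
  unfolding min_risk_def
  by (rule cINF_lower, rule bdd_belowI2[of _ noise_level]) (simp_all add: expected_risk_eq)

lemma expectation_excess_risk_nonneg:
  assumes "\<And>\<omega>. f \<omega> \<in> RKHS K"
  shows "0 \<le> expectation (\<lambda>\<omega>. excess_risk M K x fstar eps (f \<omega>))"
  using assms min_risk_le unfolding excess_risk_def min_risk_def[symmetric]
  by (intro integral_nonneg_AE) simp

lemma expectation_excess_risk_spectral:
  assumes B: "orthonormal_basis B"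
    and residual: "\<And>\<omega> b. b \<in> B \<Longrightarrow>
      (outputs x fstar eps \<omega> - design_vec x (f \<omega>)) \<bullet> b = \<rho> b * (outputs x fstar eps \<omega> \<bullet> b)"
  shows "expectation (\<lambda>\<omega>. excess_risk M K x fstar eps (f \<omega>)) =
    (\<Sum>b\<in>B. filter_risk (\<rho> b) (expectation (\<lambda>\<omega>. (noise \<omega> \<bullet> b)\<^sup>2)) (design_vec x fstar \<bullet> b))
      / real CARD('n) + noise_level - min_risk"
proof -
  define F where "F = design_vec x fstar"
  define Q where "Q = (\<lambda>\<omega>. \<Sum>b\<in>B. ((1 - \<rho> b) * (noise \<omega> \<bullet> b) - \<rho> b * (F \<bullet> b))\<^sup>2)"
  have "(design_vec x (f \<omega>) - F) \<bullet> b = (1 - \<rho> b) * (noise \<omega> \<bullet> b) - \<rho> b * (F \<bullet> b)"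
    if "b \<in> B" for \<omega> b
  proof -
    have "(design_vec x (f \<omega>) - F) \<bullet> b =
        noise \<omega> \<bullet> b - (outputs x fstar eps \<omega> - design_vec x (f \<omega>)) \<bullet> b"
      unfolding outputs_eq F_def by (simp add: inner_diff_left inner_add_left)
    also have "\<dots> = noise \<omega> \<bullet> b - \<rho> b * (outputs x fstar eps \<omega> \<bullet> b)"
      by (simp only: residual[OF that])
    also have "\<dots> = (1 - \<rho> b) * (noise \<omega> \<bullet> b) - \<rho> b * (F \<bullet> b)"
      unfolding outputs_eq F_def by (simp add: inner_add_left algebra_simps)
    finally show ?thesis .
  qed
  then have "excess_risk M K x fstar eps (f \<omega>) = Q \<omega> / real CARD('n) + noise_level - min_risk" for \<omega>
    unfolding excess_risk_def min_risk_def[symmetric] expected_risk_eq Q_def F_def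
    using orthonormal_basis_parseval[OF B] by simp
  moreover have "integrable M Q"
    and "expectation Q = (\<Sum>b\<in>B. filter_risk (\<rho> b) (expectation (\<lambda>\<omega>. (noise \<omega> \<bullet> b)\<^sup>2)) (F \<bullet> b))"
    unfolding Q_def filter_risk_def
    using expectation_centered_affine_square[OF noise_component] by (auto simp: integral_sum power_mult_distrib)
  ultimately show ?thesis
    unfolding F_def using prob_space by simp
qed

text \<open>The infimum is bounded by the risk of the least-squares fit in the span of the kernel
  sections, which leaves only the component of the signal in the kernel of the Gram matrix.\<close>
lemma min_risk_le_null_component:
  assumes B: "orthonormal_basis B" and eig: "\<And>b. b \<in> B \<Longrightarrow> gram K x *v b = \<mu> b *\<^sub>R b"
  shows "min_risk \<le> (\<Sum>b\<in>B. if \<mu> b = 0 then (design_vec x fstar \<bullet> b)\<^sup>2 else 0) / real CARD('n)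
    + noise_level"
proof -
  define F where "F = design_vec x fstar"
  define \<beta> where "\<beta> = (\<Sum>b\<in>B. (if \<mu> b = 0 then 0 else (F \<bullet> b) / \<mu> b) *\<^sub>R b)"
  define v where "v = (\<lambda>z. \<Sum>i\<in>UNIV. \<beta> $ i * K z (x i))"
  have "(design_vec x v - F) \<bullet> b = (if \<mu> b = 0 then - (F \<bullet> b) else 0)" if "b \<in> B" for b
    using orthonormal_basis_coeff[OF B that] eig[OF that]
    unfolding v_def design_vec_kernel_expansion \<beta>_def
    by (simp add: inner_diff_left gram_self_adjoint[OF kernel_symmetric])
  then have "(norm (design_vec x v - F))\<^sup>2 = (\<Sum>b\<in>B. if \<mu> b = 0 then (F \<bullet> b)\<^sup>2 else 0)"
    unfolding orthonormal_basis_parseval[OF B] by (intro sum.cong) auto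
  then show ?thesis
    using min_risk_le[OF kernel_expansion_in_RKHS[of \<beta> K x]]
    unfolding expected_risk_eq v_def F_def by simp
qed

lemma expectation_excess_risk_landweber:
  assumes B: "orthonormal_basis B" and eig: "\<And>b. b \<in> B \<Longrightarrow> gram K x *v b = \<mu> b *\<^sub>R b"
  shows "expectation (\<lambda>\<omega>. excess_risk M K x fstar eps
      (\<lambda>z. \<Sum>i\<in>UNIV. landweber (gram K x) (outputs x fstar eps \<omega>) \<gamma> t $ i * K (x i) z)) =
    (\<Sum>b\<in>B. filter_risk ((1 - \<gamma> / real CARD('n) * \<mu> b) ^ t)
       (expectation (\<lambda>\<omega>. (noise \<omega> \<bullet> b)\<^sup>2)) (design_vec x fstar \<bullet> b))
      / real CARD('n) + noise_level - min_risk"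
proof (rule expectation_excess_risk_spectral[OF B])
  fix \<omega> b assume "b \<in> B"
  show "(outputs x fstar eps \<omega> - design_vec x
          (\<lambda>z. \<Sum>i\<in>UNIV. landweber (gram K x) (outputs x fstar eps \<omega>) \<gamma> t $ i * K (x i) z)) \<bullet> b
      = (1 - \<gamma> / real CARD('n) * \<mu> b) ^ t * (outputs x fstar eps \<omega> \<bullet> b)"
    using landweber_residual_eigen[OF gram_self_adjoint[OF kernel_symmetric] eig[OF \<open>b \<in> B\<close>]]
    by (subst kernel_symmetric) (simp add: design_vec_kernel_expansion)
qed

lemma expectation_excess_risk_krls:
  assumes B: "orthonormal_basis B" and eig: "\<And>b. b \<in> B \<Longrightarrow> gram K x *v b = \<mu> b *\<^sub>R b"
    and nonneg: "\<And>b. b \<in> B \<Longrightarrow> 0 \<le> \<mu> b" and "0 < lam"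
  shows "expectation (\<lambda>\<omega>. excess_risk M K x fstar eps
      (\<lambda>z. \<Sum>i\<in>UNIV. krls (gram K x) (outputs x fstar eps \<omega>) lam $ i * K z (x i))) =
    (\<Sum>b\<in>B. filter_risk (lam * real CARD('n) / (\<mu> b + lam * real CARD('n)))
       (expectation (\<lambda>\<omega>. (noise \<omega> \<bullet> b)\<^sup>2)) (design_vec x fstar \<bullet> b))
      / real CARD('n) + noise_level - min_risk"
proof (rule expectation_excess_risk_spectral[OF B])
  fix \<omega> b assume "b \<in> B"
  show "(outputs x fstar eps \<omega> - design_vec x
          (\<lambda>z. \<Sum>i\<in>UNIV. krls (gram K x) (outputs x fstar eps \<omega>) lam $ i * K z (x i))) \<bullet> b
      = lam * real CARD('n) / (\<mu> b + lam * real CARD('n)) * (outputs x fstar eps \<omega> \<bullet> b)"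
    using krls_residual_eigen[OF gram_self_adjoint[OF kernel_symmetric] gram_psd[OF kernel_pd]
        eig[OF \<open>b \<in> B\<close>] nonneg[OF \<open>b \<in> B\<close>] \<open>0 < lam\<close>]
    by (simp add: design_vec_kernel_expansion)
qed

end

theorem (in fixed_design) landweber_excess_risk_le_krls:
  assumes "0 < \<gamma>" and "\<gamma> * onorm (\<lambda>v. gram K x *v v) < 1" and "0 < t"
  shows "expectation (\<lambda>\<omega>. excess_risk M K x fstar eps
            (\<lambda>z. \<Sum>i\<in>UNIV. landweber (gram K x) (outputs x fstar eps \<omega>) \<gamma> t $ i * K (x i) z))
       \<le> 4 * expectation (\<lambda>\<omega>. excess_risk M K x fstar eps
            (\<lambda>z. \<Sum>i\<in>UNIV. krls (gram K x) (outputs x fstar eps \<omega>) (1 / (\<gamma> * real t)) $ i * K z (x i)))"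
    (is "?landweber \<le> 4 * ?krls")
proof -
  obtain B \<mu> where B: "orthonormal_basis B" and eig: "\<And>b. b \<in> B \<Longrightarrow> gram K x *v b = \<mu> b *\<^sub>R b"
    and \<mu>_nonneg: "\<And>b. b \<in> B \<Longrightarrow> 0 \<le> \<mu> b"
    and \<mu>_le: "\<And>b. b \<in> B \<Longrightarrow> \<mu> b \<le> onorm (\<lambda>v. gram K x *v v)"
    using gram_eigenbasis[OF kernel_pd] by metis
  define n where "n = real CARD('n)"
  define risk where
    "risk \<rho> b = filter_risk \<rho> (expectation (\<lambda>\<omega>. (noise \<omega> \<bullet> b)\<^sup>2)) (design_vec x fstar \<bullet> b)" for \<rho> b
  define null where "null b = (if \<mu> b = 0 then (design_vec x fstar \<bullet> b)\<^sup>2 else 0)" for b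
  define SL where "SL = (\<Sum>b\<in>B. risk ((1 - \<gamma> / n * \<mu> b) ^ t) b)"
  define SR where "SR = (\<Sum>b\<in>B. risk (1 / (\<gamma> * t) * n / (\<mu> b + 1 / (\<gamma> * t) * n)) b)"
  have "1 \<le> n"
    unfolding n_def by (simp add: Suc_le_eq)
  have "0 < 1 / (\<gamma> * real t)"
    using \<open>0 < \<gamma>\<close> \<open>0 < t\<close> by simp
  have "risk ((1 - \<gamma> / n * \<mu> b) ^ t) b - null b
      \<le> 4 * (risk (1 / (\<gamma> * t) * n / (\<mu> b + 1 / (\<gamma> * t) * n)) b - null b)" if "b \<in> B" for b
  proof -
    have "\<gamma> * \<mu> b \<le> \<gamma> * onorm (\<lambda>v. gram K x *v v)"
      using \<mu>_le[OF that] \<open>0 < \<gamma>\<close> by simp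
    then have "\<gamma> * \<mu> b < 1"
      using assms(2) by linarith
    then show ?thesis
      unfolding risk_def null_def
      using filter_risk_landweber_le_krls \<open>0 < \<gamma>\<close> \<mu>_nonneg[OF that] \<open>1 \<le> n\<close> \<open>0 < t\<close> by simp
  qed
  then have "(\<Sum>b\<in>B. risk ((1 - \<gamma> / n * \<mu> b) ^ t) b - null b)
      \<le> (\<Sum>b\<in>B. 4 * (risk (1 / (\<gamma> * t) * n / (\<mu> b + 1 / (\<gamma> * t) * n)) b - null b))"
    by (rule sum_mono)
  then have "SL - sum null B \<le> 4 * (SR - sum null B)"
    unfolding SL_def SR_def by (simp add: sum_subtractf sum_distrib_left)
  then have "SL / n - sum null B / n \<le> 4 * (SR / n - sum null B / n)"
    using \<open>1 \<le> n\<close> divide_right_mono[of "SL - sum null B" "4 * (SR - sum null B)" n]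
    by (simp add: diff_divide_distrib)
  moreover have "0 \<le> sum null B / n + noise_level - min_risk"
    using min_risk_le_null_component[OF B eig] unfolding null_def n_def by simp
  moreover have "?landweber = SL / n + noise_level - min_risk"
    unfolding SL_def risk_def n_def by (rule expectation_excess_risk_landweber[OF B eig])
  moreover have "?krls = SR / n + noise_level - min_risk"
    using expectation_excess_risk_krls[OF B eig \<mu>_nonneg \<open>0 < 1 / (\<gamma> * real t)\<close>]
    unfolding SR_def risk_def n_def by simp
  ultimately show ?thesis
    by (smt (verit))
qed

theorem mainTheorem2:
  fixes M :: "'w measure"
    and x :: "'n::finite \<Rightarrow> real^'d::finite"
    and fstar :: "real^'d \<Rightarrow> real"
    and eps :: "'n \<Rightarrow> 'w \<Rightarrow> real"
    and K :: "real^'d \<Rightarrow> real^'d \<Rightarrow> real"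
    and \<sigma> \<gamma> :: real
    and t :: nat
  assumes "prob_space M"
    and "prob_space.indep_vars M (\<lambda>_. borel) eps UNIV"
    and "\<forall>i j. distr M borel (eps i) = distr M borel (eps j)"
    and "\<forall>i. integrable M (\<lambda>\<omega>. (eps i \<omega>)\<^sup>2)"
    and "\<forall>i. prob_space.expectation M (eps i) = 0"
    and "\<forall>i. prob_space.variance M (eps i) = \<sigma>\<^sup>2"
    and "pd_kernel K"
    and "0 < \<gamma>"
    and "\<gamma> * onorm (\<lambda>v. gram K x *v v) < 1"
    and "2 \<le> t"
  shows "prob_space.expectation M (\<lambda>\<omega>. excess_risk M K x fstar eps
            (\<lambda>z. \<Sum>i\<in>UNIV. landweber (gram K x) (outputs x fstar eps \<omega>) \<gamma> t $ i * K (x i) z))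
         \<le> 4 * (1 + 1 / (real t - 1))\<^sup>2 *
           prob_space.expectation M (\<lambda>\<omega>. excess_risk M K x fstar eps
            (\<lambda>z. \<Sum>i\<in>UNIV. krls (gram K x) (outputs x fstar eps \<omega>) (1 / (\<gamma> * real t)) $ i * K z (x i)))
       \<and> 4 * (1 + 1 / (real t - 1))\<^sup>2 \<le> 16"
proof -
  have "eps i \<in> borel_measurable M" for i
    using assms(2) unfolding prob_space.indep_vars_def2[OF assms(1)] by blast
  then interpret fixed_design M x fstar eps K
    using assms(1,4,5,7) by (intro fixed_design.intro fixed_design_axioms.intro) auto
  let ?krls = "expectation (\<lambda>\<omega>. excess_risk M K x fstar eps
      (\<lambda>z. \<Sum>i\<in>UNIV. krls (gram K x) (outputs x fstar eps \<omega>) (1 / (\<gamma> * real t)) $ i * K z (x i)))"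
  have "0 \<le> ?krls"
    by (intro expectation_excess_risk_nonneg kernel_expansion_in_RKHS)
  then have "4 * ?krls \<le> 4 * (1 + 1 / (real t - 1))\<^sup>2 * ?krls"
    using landweber_constant_bounds(1)[OF assms(10)] by (rule mult_right_mono[rotated])
  moreover have "0 < t"
    using assms(10) by simp
  then have "expectation (\<lambda>\<omega>. excess_risk M K x fstar eps
      (\<lambda>z. \<Sum>i\<in>UNIV. landweber (gram K x) (outputs x fstar eps \<omega>) \<gamma> t $ i * K (x i) z)) \<le> 4 * ?krls"
    by (rule landweber_excess_risk_le_krls[OF assms(8,9)])
  ultimately show ?thesis
    using landweber_constant_bounds(2)[OF assms(10)] by linarith
qed

end
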